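(* Let $r \ge 2$ be an integer. There is a constant $c = c(r) > 0$, depending only on $r$, such that for all integers $n \ge r$, \[\overrightarrow{\Gamma}_{r-1}(H(n,r)) \ge c\,(\ln n)^{\frac{1}{r-1}}.\]
   Context: $H(n,r)$ denotes the complete $r$-uniform hypergraph on $n$ vertices (every $r$-subset of the $n$-element vertex set is an edge). An orientation $D$ of an $r$-uniform hypergraph $H=(V,\mathcal{E})$ assigns to each edge $E\in\mathcal{E}$ exactly one of the $r!$ linear orderings of its elements. For $1\le p\le r-1$, a set $S\subseteq V$ is a directed $p$-dominating set of $D$ if for every vertex $u\in V\setminus S$ there is an edge $E\in\mathcal{E}$ with $u\in E$ whose first $p$ vertices (in the ordering given by $D$) all lie in $S$. $\overrightarrow{\gamma}_p(D)$ is the minimum cardinality of a directed $p$-dominating set of $D$, and $\overrightarrow{\Gamma}_p(H)$ is the maximum of $\overrightarrow{\gamma}_p(D)$ over all orientations $D$ of $H$. $\ln$ is the natural logarithm. *)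

theory Defs
  imports "HOL-Analysis.Analysis"
begin

definition complete_hyp_edges :: "nat \<Rightarrow> nat \<Rightarrow> nat set set" where
  "complete_hyp_edges n r = {E. E \<subseteq> {0..<n} \<and> card E = r}"

text \<open>An orientation assigns to each edge a linear ordering of its elements,
represented as a distinct list enumerating the edge.\<close>

definition is_orientation :: "'a set set \<Rightarrow> ('a set \<Rightarrow> 'a list) \<Rightarrow> bool" where
  "is_orientation Es D \<longleftrightarrow> (\<forall>E\<in>Es. distinct (D E) \<and> set (D E) = E)"

definition is_dir_dom_set ::
  "nat \<Rightarrow> 'a set \<Rightarrow> 'a set set \<Rightarrow> ('a set \<Rightarrow> 'a list) \<Rightarrow> 'a set \<Rightarrow> bool" where
  "is_dir_dom_set p V Es D S \<longleftrightarrow> S \<subseteq> V \<and>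
     (\<forall>u\<in>V - S. \<exists>E\<in>Es. u \<in> E \<and> set (take p (D E)) \<subseteq> S)"

definition dir_dom_number ::
  "nat \<Rightarrow> 'a set \<Rightarrow> 'a set set \<Rightarrow> ('a set \<Rightarrow> 'a list) \<Rightarrow> nat" where
  "dir_dom_number p V Es D = (LEAST k. \<exists>S. is_dir_dom_set p V Es D S \<and> card S = k)"

definition upper_dir_dom_number :: "nat \<Rightarrow> 'a set \<Rightarrow> 'a set set \<Rightarrow> nat" where
  "upper_dir_dom_number p V Es =
     Max {dir_dom_number p V Es D | D. is_orientation Es D}"

end

theory Submission
  imports Defs "HOL-Real_Asymp.Real_Asymp"
begin

text \<open>
As Erdos observed, a random tournament on \<open>n\<close> vertices has, with positive probability, the
property that every set of \<open>k \<approx> log\<^sub>1\<^sub>6 n\<close> vertices is beaten by one further vertex.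
Orient each edge of \<open>H(n,r)\<close> so that a vertex beating all other vertices of the edge, if there
is one, comes first. If \<open>S\<close> were a directed \<open>(r-1)\<close>-dominating set with \<open>|S| \<le> k\<close>, some
\<open>u \<notin> S\<close> beats all of \<open>S\<close>; the edge dominating \<open>u\<close> has its first \<open>r-1\<close> vertices in \<open>S\<close>, so
\<open>u\<close> is its last vertex, yet \<open>u\<close> beats the others and is therefore listed first.
Hence the upper directed domination number exceeds \<open>log\<^sub>1\<^sub>6 n\<close>, which is more than claimed.
\<close>

lemma card_subsets_blockwise_constraints:
  fixes Q :: "'u \<Rightarrow> 'a set" and Phi :: "'u \<Rightarrow> 'a set \<Rightarrow> bool"
  assumes "finite U" "finite P" "\<forall>u\<in>U. Q u \<subseteq> P"
    "\<forall>u\<in>U. \<forall>v\<in>U. u \<noteq> v \<longrightarrow> Q u \<inter> Q v = {}"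
  shows "card {A. A \<subseteq> P \<and> (\<forall>u\<in>U. Phi u (A \<inter> Q u))} * 2 ^ (\<Sum>u\<in>U. card (Q u))
         = 2 ^ card P * (\<Prod>u\<in>U. card {B. B \<subseteq> Q u \<and> Phi u B})"
  using assms
proof (induction U arbitrary: P rule: finite_induct)
  case empty
  have "{A. A \<subseteq> P} = Pow P" by auto
  then show ?case using empty by (simp add: card_Pow)
next
  case (insert u U)
  define SB where "SB = {B. B \<subseteq> Q u \<and> Phi u B}"
  define SC where "SC = {C. C \<subseteq> P - Q u \<and> (\<forall>v\<in>U. Phi v (C \<inter> Q v))}"
  define X where "X = (\<Prod>v\<in>U. card {B. B \<subseteq> Q v \<and> Phi v B})"
  define s where "s = (\<Sum>v\<in>U. card (Q v))"
  have Qu: "Q u \<subseteq> P" using insert.prems(2) by simp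
  have disj: "Q u \<inter> Q v = {}" if "v \<in> U" for v
  proof -
    have "u \<noteq> v" using that insert.hyps(2) by auto
    then show ?thesis using insert.prems(3) that by simp
  qed
  have "{A. A \<subseteq> P \<and> (\<forall>v\<in>insert u U. Phi v (A \<inter> Q v))} = (\<lambda>(B, C). B \<union> C) ` (SB \<times> SC)"
  proof (rule set_eqI, rule iffI)
    fix A assume A: "A \<in> {A. A \<subseteq> P \<and> (\<forall>v\<in>insert u U. Phi v (A \<inter> Q v))}"
    have "(A - Q u) \<inter> Q v = A \<inter> Q v" if "v \<in> U" for v using disj[OF that] by blast
    then have "A \<inter> Q u \<in> SB" "A - Q u \<in> SC" using A by (auto simp: SB_def SC_def)
    moreover have "A = (A \<inter> Q u) \<union> (A - Q u)" by blast
    ultimately show "A \<in> (\<lambda>(B, C). B \<union> C) ` (SB \<times> SC)" by blast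
  next
    fix A assume "A \<in> (\<lambda>(B, C). B \<union> C) ` (SB \<times> SC)"
    then obtain B C where A: "A = B \<union> C" "B \<in> SB" "C \<in> SC" by auto
    have "(B \<union> C) \<inter> Q u = B" using A by (auto simp: SB_def SC_def)
    moreover have "(B \<union> C) \<inter> Q v = C \<inter> Q v" if "v \<in> U" for v
      using A disj[OF that] by (auto simp: SB_def)
    ultimately show "A \<in> {A. A \<subseteq> P \<and> (\<forall>v\<in>insert u U. Phi v (A \<inter> Q v))}"
      using A Qu by (auto simp: SB_def SC_def)
  qed
  moreover have "inj_on (\<lambda>(B, C). B \<union> C) (SB \<times> SC)"
  proof (rule inj_onI, clarsimp)
    fix B C B' C' assume h: "B \<in> SB" "C \<in> SC" "B' \<in> SB" "C' \<in> SC" "B \<union> C = B' \<union> C'"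
    have "B = (B \<union> C) \<inter> Q u" "B' = (B' \<union> C') \<inter> Q u" "C = (B \<union> C) - Q u" "C' = (B' \<union> C') - Q u"
      using h by (auto simp: SB_def SC_def)
    then show "B = B' \<and> C = C'" using h(5) by metis
  qed
  ultimately have card_split:
    "card {A. A \<subseteq> P \<and> (\<forall>v\<in>insert u U. Phi v (A \<inter> Q v))} = card SB * card SC"
    by (simp add: card_image card_cartesian_product)
  have "card SC * 2 ^ s = 2 ^ card (P - Q u) * X"
    unfolding SC_def s_def X_def
  proof (rule insert.IH)
    show "\<forall>v\<in>U. Q v \<subseteq> P - Q u" using disj insert.prems(2) by blast
  qed (use insert.prems in auto)
  moreover have "card (P - Q u) + card (Q u) = card P"
    using Qu insert.prems(1) by (simp add: card_Diff_subset card_mono finite_subset)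
  ultimately have "card SB * card SC * 2 ^ (card (Q u) + s) = 2 ^ card P * (card SB * X)"
    by (metis mult.assoc mult.left_commute power_add)
  then show ?case
    unfolding card_split sum.insert[OF insert.hyps] prod.insert[OF insert.hyps]
      SB_def[symmetric] X_def[symmetric] s_def[symmetric] .
qed

text \<open>A tournament on \<open>\<nat>\<close> is encoded by the set \<open>A\<close> of pairs \<open>i < j\<close> oriented from \<open>i\<close>
to \<open>j\<close>; every other pair \<open>i < j\<close> is oriented from \<open>j\<close> to \<open>i\<close>.\<close>

definition beats :: "(nat \<times> nat) set \<Rightarrow> nat \<Rightarrow> nat \<Rightarrow> bool" where
  "beats A i j \<longleftrightarrow> (i < j \<and> (i, j) \<in> A) \<or> (j < i \<and> (j, i) \<notin> A)"

lemma beats_asym: "\<not> (beats A x y \<and> beats A y x)"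
  unfolding beats_def by auto

lemma Int_image_eq_iff:
  assumes "W \<subseteq> f ` X"
  shows "A \<inter> f ` X = W \<longleftrightarrow> (\<forall>x\<in>X. f x \<in> A \<longleftrightarrow> f x \<in> W)"
  using assms by blast

lemma beats_all_iff:
  assumes "u \<notin> X"
  shows "(\<forall>x\<in>X. beats A u x) \<longleftrightarrow>
     A \<inter> (\<lambda>x. (min u x, max u x)) ` X = {(u, x) | x. x \<in> X \<and> u < x}"
    (is "_ \<longleftrightarrow> A \<inter> ?f ` X = ?W")
proof -
  have "?W \<subseteq> ?f ` X" by force
  then have "A \<inter> ?f ` X = ?W \<longleftrightarrow> (\<forall>x\<in>X. ?f x \<in> A \<longleftrightarrow> ?f x \<in> ?W)"
    by (rule Int_image_eq_iff)
  moreover have "?f x \<in> ?W \<longleftrightarrow> u < x" if "x \<in> X" for x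
    using assms that by (cases u x rule: linorder_cases) auto
  moreover have "beats A u x \<longleftrightarrow> (?f x \<in> A \<longleftrightarrow> u < x)" if "x \<in> X" for x
    using assms that by (cases u x rule: linorder_cases) (auto simp: beats_def)
  ultimately show ?thesis by simp
qed

definition upper_pairs :: "nat \<Rightarrow> (nat \<times> nat) set" where
  "upper_pairs n = {(i, j). i < j \<and> j < n}"

lemma finite_upper_pairs: "finite (upper_pairs n)"
  by (rule finite_subset[of _ "{0..<n} \<times> {0..<n}"]) (auto simp: upper_pairs_def)

lemma card_tournaments_without_dominator:
  assumes XV: "X \<subseteq> {0..<n}" and cX: "card X = k"
  shows "real (card {A. A \<subseteq> upper_pairs n \<and> (\<forall>u\<in>{0..<n} - X. \<not> (\<forall>x\<in>X. beats A u x))})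
           = 2 ^ card (upper_pairs n) * (1 - 1 / 2 ^ k) ^ (n - k)"
proof -
  define Q where "Q u = (\<lambda>x. (min u x, max u x)) ` X" for u
  define W where "W u = {(u, x) | x. x \<in> X \<and> u < x}" for u
  \<comment> \<open>Whether \<open>u\<close> beats \<open>X\<close> depends only on the pairs \<open>Q u\<close> joining \<open>u\<close> to \<open>X\<close>, and exactly one
    of the \<open>2^k\<close> choices on them, namely \<open>W u\<close>, makes it happen; these blocks are disjoint.\<close>
  define Bad where "Bad = {A. A \<subseteq> upper_pairs n \<and> (\<forall>u\<in>{0..<n} - X. A \<inter> Q u \<noteq> W u)}"
  have finX: "finite X" using XV finite_subset by blast
  have card_Q: "card (Q u) = k" if "u \<in> {0..<n} - X" for u
  proof -
    have "inj_on (\<lambda>x. (min u x, max u x)) X"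
      using that by (auto simp: inj_on_def min_def max_def split: if_splits)
    then show ?thesis using cX by (simp add: Q_def card_image)
  qed
  have card_allowed: "card {B. B \<subseteq> Q u \<and> B \<noteq> W u} = 2 ^ k - 1" if u: "u \<in> {0..<n} - X" for u
  proof -
    have "W u \<subseteq> Q u" unfolding W_def Q_def by force
    moreover have "{B. B \<subseteq> Q u \<and> B \<noteq> W u} = Pow (Q u) - {W u}" by auto
    ultimately show ?thesis using finX card_Q[OF u] by (simp add: card_Pow Q_def)
  qed
  have card_compl: "card ({0..<n} - X) = n - k" using XV cX finX by (simp add: card_Diff_subset)
  have "card Bad * 2 ^ (\<Sum>u\<in>{0..<n} - X. card (Q u))
      = 2 ^ card (upper_pairs n) * (\<Prod>u\<in>{0..<n} - X. card {B. B \<subseteq> Q u \<and> B \<noteq> W u})"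
    unfolding Bad_def
  proof (rule card_subsets_blockwise_constraints[OF _ finite_upper_pairs])
    show "\<forall>u\<in>{0..<n} - X. Q u \<subseteq> upper_pairs n"
    proof (intro ballI subsetI)
      fix u z assume "u \<in> {0..<n} - X" "z \<in> Q u"
      then obtain x where "x \<in> X" "u \<noteq> x" "u < n" "z = (min u x, max u x)"
        by (auto simp: Q_def)
      then show "z \<in> upper_pairs n" using XV by (auto simp: upper_pairs_def min_def max_def)
    qed
    show "\<forall>u\<in>{0..<n} - X. \<forall>v\<in>{0..<n} - X. u \<noteq> v \<longrightarrow> Q u \<inter> Q v = {}"
    proof (intro ballI impI equals0I)
      fix u v z assume uv: "u \<in> {0..<n} - X" "v \<in> {0..<n} - X" "u \<noteq> v" and "z \<in> Q u \<inter> Q v"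
      then obtain x y where "x \<in> X" "y \<in> X" "(min u x, max u x) = (min v y, max v y)"
        by (auto simp: Q_def)
      then show False using uv by (auto simp: min_def max_def split: if_splits)
    qed
  qed simp
  moreover have "(\<Sum>u\<in>{0..<n} - X. card (Q u)) = k * (n - k)"
    using card_Q card_compl by (simp add: mult.commute)
  moreover have "(\<Prod>u\<in>{0..<n} - X. card {B. B \<subseteq> Q u \<and> B \<noteq> W u}) = (2 ^ k - 1) ^ (n - k)"
    using card_allowed card_compl by simp
  ultimately have "card Bad * (2 ^ k) ^ (n - k) = 2 ^ card (upper_pairs n) * (2 ^ k - 1) ^ (n - k)"
    by (simp add: power_mult)
  then have "real (card Bad * (2 ^ k) ^ (n - k)) = real (2 ^ card (upper_pairs n) * (2 ^ k - 1) ^ (n - k))"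
    by (rule arg_cong)
  then have "real (card Bad) * (2 ^ k) ^ (n - k) = 2 ^ card (upper_pairs n) * (2 ^ k - 1) ^ (n - k)"
    by (simp add: of_nat_diff)
  moreover have "((2::real) ^ k - 1) ^ (n - k) = (1 - 1 / 2 ^ k) ^ (n - k) * (2 ^ k) ^ (n - k)"
    by (simp add: power_mult_distrib[symmetric] field_simps)
  moreover have "{A. A \<subseteq> upper_pairs n \<and> (\<forall>u\<in>{0..<n} - X. \<not> (\<forall>x\<in>X. beats A u x))} = Bad"
    unfolding Bad_def Q_def W_def
    by (intro Collect_cong conj_cong refl ball_cong) (simp add: beats_all_iff)
  ultimately show ?thesis by simp
qed

lemma exists_tournament_dominating_all_k_sets:
  assumes "real (n choose k) * (1 - 1 / 2 ^ k) ^ (n - k) < 1"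
  shows "\<exists>A. \<forall>X. X \<subseteq> {0..<n} \<longrightarrow> card X = k \<longrightarrow> (\<exists>u\<in>{0..<n} - X. \<forall>x\<in>X. beats A u x)"
proof -
  define Bad where
    "Bad X = {A. A \<subseteq> upper_pairs n \<and> (\<forall>u\<in>{0..<n} - X. \<not> (\<forall>x\<in>X. beats A u x))}" for X
  define Fam where "Fam = {X. X \<subseteq> {0..<n} \<and> card X = k}"
  have finite_Fam: "finite Fam" unfolding Fam_def by simp
  have "real (card (\<Union>X\<in>Fam. Bad X)) \<le> (\<Sum>X\<in>Fam. real (card (Bad X)))"
    using card_UN_le[OF finite_Fam, of Bad] by (simp flip: of_nat_sum)
  also have "\<dots> = real (n choose k) * (1 - 1 / 2 ^ k) ^ (n - k) * 2 ^ card (upper_pairs n)"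
    using card_tournaments_without_dominator n_subsets[of "{0..<n}" k]
    by (simp add: Bad_def Fam_def)
  also have "\<dots> < card (Pow (upper_pairs n))"
    using assms by (simp add: card_Pow finite_upper_pairs)
  finally have "card (\<Union>X\<in>Fam. Bad X) < card (Pow (upper_pairs n))" by simp
  then have "(\<Union>X\<in>Fam. Bad X) \<noteq> Pow (upper_pairs n)" by auto
  moreover have "(\<Union>X\<in>Fam. Bad X) \<subseteq> Pow (upper_pairs n)" by (auto simp: Bad_def)
  ultimately obtain A where "A \<subseteq> upper_pairs n" "\<forall>X\<in>Fam. A \<notin> Bad X" by blast
  then show ?thesis by (auto simp: Bad_def Fam_def)
qed

lemma dir_dom_set_carrier: "is_dir_dom_set p V Es D V"
  by (simp add: is_dir_dom_set_def)

lemma dir_dom_number_ge: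
  assumes "\<And>S. is_dir_dom_set p V Es D S \<Longrightarrow> m \<le> card S"
  shows "m \<le> dir_dom_number p V Es D"
proof -
  have "\<exists>S. is_dir_dom_set p V Es D S \<and> card S = dir_dom_number p V Es D"
    unfolding dir_dom_number_def by (rule LeastI_ex) (use dir_dom_set_carrier in blast)
  then obtain S where "is_dir_dom_set p V Es D S" "card S = dir_dom_number p V Es D" by blast
  then show ?thesis using assms[of S] by simp
qed

lemma dir_dom_number_le_upper:
  assumes "finite V" "is_orientation Es D"
  shows "dir_dom_number p V Es D \<le> upper_dir_dom_number p V Es"
proof -
  have "dir_dom_number p V Es D' \<le> card V" for D'
    unfolding dir_dom_number_def by (rule Least_le) (use dir_dom_set_carrier in blast)
  then have "{dir_dom_number p V Es D' | D'. is_orientation Es D'} \<subseteq> {..card V}" by blast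
  then have "finite {dir_dom_number p V Es D' | D'. is_orientation Es D'}"
    by (rule finite_subset) simp
  then show ?thesis
    unfolding upper_dir_dom_number_def by (rule Max_ge) (use assms(2) in blast)
qed

definition source_first :: "('a::linorder \<Rightarrow> 'a \<Rightarrow> bool) \<Rightarrow> 'a set \<Rightarrow> 'a list" where
  "source_first b E =
     (let s = SOME s. s \<in> E \<and> (\<forall>x\<in>E - {s}. b s x)
      in if s \<in> E then s # sorted_list_of_set (E - {s}) else sorted_list_of_set E)"

lemma is_orientation_source_first:
  assumes "\<And>E. E \<in> Es \<Longrightarrow> finite E"
  shows "is_orientation Es (source_first b)"
proof (unfold is_orientation_def, intro ballI)
  fix E assume "E \<in> Es"
  then have "finite E" by (rule assms)
  then show "distinct (source_first b E) \<and> set (source_first b E) = E"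
    by (cases "(SOME s. s \<in> E \<and> (\<forall>x\<in>E - {s}. b s x)) \<in> E")
      (auto simp: source_first_def Let_def)
qed

lemma hd_source_first:
  assumes asym: "\<And>x y. \<not> (b x y \<and> b y x)" and "u \<in> E" and u_beats: "\<forall>x\<in>E - {u}. b u x"
  shows "hd (source_first b E) = u"
proof -
  define s where "s = (SOME s. s \<in> E \<and> (\<forall>x\<in>E - {s}. b s x))"
  have "\<exists>s. s \<in> E \<and> (\<forall>x\<in>E - {s}. b s x)" using assms(2,3) by blast
  then have s: "s \<in> E \<and> (\<forall>x\<in>E - {s}. b s x)" unfolding s_def by (rule someI_ex)
  have "s = u"
  proof (rule ccontr)
    assume "s \<noteq> u"
    then have "b s u" "b u s" using s u_beats \<open>u \<in> E\<close> by auto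
    then show False using asym by blast
  qed
  then show ?thesis using s unfolding source_first_def Let_def s_def[symmetric] by simp
qed

lemma set_minus_subset_of_set_take:
  assumes "length l = Suc p" "set (take p l) \<subseteq> S" "u \<in> set l" "u \<notin> S"
  shows "set l - {u} \<subseteq> S"
proof -
  have "l = take p l @ [l ! p]" using assms(1) take_Suc_conv_app_nth[of p l] by simp
  then have "set l = set (take p l @ [l ! p])" by (rule arg_cong)
  then show ?thesis using assms(2-4) by auto
qed

lemma dir_dom_set_source_first_card_gt:
  fixes b :: "nat \<Rightarrow> nat \<Rightarrow> bool"
  assumes r: "2 \<le> r" and asym: "\<And>x y. \<not> (b x y \<and> b y x)" and "k \<le> n"
    and dominated: "\<And>X. X \<subseteq> {0..<n} \<Longrightarrow> card X = k \<Longrightarrow> \<exists>u\<in>{0..<n} - X. \<forall>x\<in>X. b u x"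
    and S: "is_dir_dom_set (r - 1) {0..<n} (complete_hyp_edges n r) (source_first b) S"
  shows "k < card S"
proof (rule ccontr)
  assume "\<not> k < card S"
  have S_sub: "S \<subseteq> {0..<n}" using S by (simp add: is_dir_dom_set_def)
  then have "finite S" using finite_subset by blast
  have "k - card S \<le> card ({0..<n} - S)" using S_sub \<open>finite S\<close> \<open>k \<le> n\<close> by (simp add: card_Diff_subset)
  then obtain T where T: "T \<subseteq> {0..<n} - S" "card T = k - card S" "finite T"
    by (rule obtain_subset_with_card_n)
  have "card (S \<union> T) = card S + card T"
    using T \<open>finite S\<close> by (intro card_Un_disjoint) auto
  then have "S \<union> T \<subseteq> {0..<n}" "card (S \<union> T) = k"
    using S_sub T \<open>\<not> k < card S\<close> by auto
  then obtain u where u: "u \<in> {0..<n} - (S \<union> T)" "\<forall>x\<in>S. b u x" using dominated by blast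
  then obtain E where E: "E \<in> complete_hyp_edges n r" "u \<in> E"
      "set (take (r - 1) (source_first b E)) \<subseteq> S"
    using S unfolding is_dir_dom_set_def by blast
  define l where "l = source_first b E"
  have "card E = r" using E(1) by (simp add: complete_hyp_edges_def)
  have "finite E" using E(1) by (auto simp: complete_hyp_edges_def intro: finite_subset)
  then have "is_orientation {E} (source_first b)" by (intro is_orientation_source_first) simp
  then have l: "distinct l" "set l = E" by (simp_all add: is_orientation_def l_def)
  then have len: "length l = Suc (r - 1)" using distinct_card[OF l(1)] \<open>card E = r\<close> r by simp
  have "set l - {u} \<subseteq> S"
    by (rule set_minus_subset_of_set_take[OF len]) (use E(2,3) l(2) u(1) in \<open>simp_all add: l_def\<close>)
  then have "\<forall>x\<in>E - {u}. b u x" using u(2) l(2) by blast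
  then have "hd l = u" unfolding l_def by (rule hd_source_first[OF asym E(2)])
  moreover have "take (r - 1) l \<noteq> []" using len r by (cases l) simp_all
  ultimately have "u \<in> set (take (r - 1) l)"
    using hd_in_set[of "take (r - 1) l"] hd_take[of "r - 1" l] r by simp
  then show False using E(3) u(1) l_def by blast
qed

lemma upper_dir_dom_number_gt:
  fixes b :: "nat \<Rightarrow> nat \<Rightarrow> bool"
  assumes "2 \<le> r" "\<And>x y. \<not> (b x y \<and> b y x)" "k \<le> n"
    "\<And>X. X \<subseteq> {0..<n} \<Longrightarrow> card X = k \<Longrightarrow> \<exists>u\<in>{0..<n} - X. \<forall>x\<in>X. b u x"
  shows "k < upper_dir_dom_number (r - 1) {0..<n} (complete_hyp_edges n r)"
proof -
  have "\<And>E. E \<in> complete_hyp_edges n r \<Longrightarrow> finite E"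
    by (auto simp: complete_hyp_edges_def intro: finite_subset)
  then have "is_orientation (complete_hyp_edges n r) (source_first b)"
    by (rule is_orientation_source_first)
  have "Suc k \<le> dir_dom_number (r - 1) {0..<n} (complete_hyp_edges n r) (source_first b)"
    using dir_dom_set_source_first_card_gt[OF assms] by (intro dir_dom_number_ge) (simp add: Suc_le_eq)
  also have "\<dots> \<le> upper_dir_dom_number (r - 1) {0..<n} (complete_hyp_edges n r)"
    by (rule dir_dom_number_le_upper) (simp_all add: \<open>is_orientation _ _\<close>)
  finally show ?thesis by simp
qed

lemma upper_dir_dom_number_pos:
  assumes "2 \<le> r" "r \<le> n"
  shows "0 < upper_dir_dom_number (r - 1) {0..<n} (complete_hyp_edges n r)"
proof (rule upper_dir_dom_number_gt[where b = "\<lambda>_ _. False" and k = 0])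
  fix X :: "nat set" assume "X \<subseteq> {0..<n}" "card X = 0"
  then have "X = {}" using finite_subset by fastforce
  then show "\<exists>u\<in>{0..<n} - X. \<forall>x\<in>X. False" using assms by (intro bexI[of _ 0]) auto
qed (use assms in auto)

lemma ln_of_nat_nonneg: "0 \<le> ln (real n)"
  by (cases "n = 0") simp_all

lemma one_lt_ln_16: "1 < ln (16::real)"
proof -
  have "exp 1 < (16::real)" using exp_le by simp
  then have "ln (exp 1) < ln (16::real)" by (subst ln_less_cancel_iff) auto
  then show ?thesis by simp
qed

lemma binomial_mult_power_less_one:
  fixes n k :: nat
  assumes "real k * ln (real n) * 2 ^ k + real k < real n"
  shows "real (n choose k) * (1 - 1 / 2 ^ k) ^ (n - k) < 1"
proof -
  have "0 \<le> real k * ln (real n) * 2 ^ k" using ln_of_nat_nonneg by simp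
  then have "real k < real n" using assms by linarith
  then have "k < n" by simp
  then have "n choose k \<le> n ^ k" by (intro binomial_le_pow) simp
  then have "real (n choose k) \<le> real (n ^ k)" by (simp only: of_nat_le_iff)
  also have "\<dots> = exp (real k * ln (real n))"
    using \<open>k < n\<close> by (simp add: exp_of_nat_mult)
  finally have binomial: "real (n choose k) \<le> exp (real k * ln (real n))" .
  have "(1 - 1 / 2 ^ k) ^ (n - k) \<le> exp (- (1 / (2::real) ^ k)) ^ (n - k)"
    by (intro power_mono) (use exp_ge_add_one_self[of "- (1 / 2 ^ k)"] in auto)
  also have "\<dots> = exp (- ((real n - real k) / 2 ^ k))"
    using \<open>k < n\<close> by (simp add: exp_of_nat_mult[symmetric] of_nat_diff field_simps)
  finally have power: "(1 - 1 / 2 ^ k) ^ (n - k) \<le> exp (- ((real n - real k) / 2 ^ k))" .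
  have "real (n choose k) * (1 - 1 / 2 ^ k) ^ (n - k)
      \<le> exp (real k * ln (real n)) * exp (- ((real n - real k) / 2 ^ k))"
    using binomial power by (intro mult_mono) (auto simp: field_simps)
  also have "\<dots> = exp (real k * ln (real n) - (real n - real k) / 2 ^ k)"
    by (simp flip: exp_add)
  also have "\<dots> < 1"
    using assms by (simp add: field_simps)
  finally show ?thesis .
qed

lemma erdos_condition_if_16_power_le:
  fixes n k :: nat
  assumes large: "real n powr (1/4) * (ln (real n))\<^sup>2 + ln (real n) < real n"
    and "16 ^ k \<le> n"
  shows "real k * ln (real n) * 2 ^ k + real k < real n"
proof -
  have "(1::nat) \<le> 16 ^ k" by simp
  then have n_pos: "0 < real n" using \<open>16 ^ k \<le> n\<close> by linarith
  have "real k * 1 \<le> real k * ln 16" using one_lt_ln_16 by (intro mult_left_mono) auto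
  also have "\<dots> = ln (real (16 ^ k))" by (simp add: ln_realpow)
  also have "\<dots> \<le> ln (real n)"
    using \<open>16 ^ k \<le> n\<close> n_pos by (subst ln_le_cancel_iff) (auto simp del: of_nat_power)
  finally have k_le: "real k \<le> ln (real n)" by simp
  have "((2::real) ^ k) ^ 4 = (2 ^ 4) ^ k" by (simp only: power_mult[symmetric] mult.commute)
  also have "\<dots> = real (16 ^ k)" by simp
  also have "\<dots> \<le> real n" using \<open>16 ^ k \<le> n\<close> by (simp only: of_nat_le_iff)
  also have "\<dots> = (real n powr (1/4)) ^ 4" using n_pos by (simp add: powr_power)
  finally have two_pow_le: "2 ^ k \<le> real n powr (1/4)" by simp
  have "real k * ln (real n) * 2 ^ k \<le> ln (real n) * ln (real n) * real n powr (1/4)"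
    using k_le two_pow_le n_pos by (intro mult_mono) auto
  then show ?thesis using large k_le by (simp add: power2_eq_square mult_ac)
qed

lemma eventually_upper_dir_dom_number_gt_log:
  assumes "2 \<le> r"
  shows "\<forall>\<^sub>F n in sequentially.
    ln (real n) / ln 16 < real (upper_dir_dom_number (r - 1) {0..<n} (complete_hyp_edges n r))"
proof -
  have "\<forall>\<^sub>F n in sequentially. real n powr (1/4) * (ln (real n))\<^sup>2 + ln (real n) < real n"
    by real_asymp
  moreover have "\<forall>\<^sub>F n in sequentially. 1 \<le> n" by (rule eventually_ge_at_top)
  ultimately show ?thesis
  proof eventually_elim
    case (elim n)
    define k where "k = nat \<lfloor>log 16 (real n)\<rfloor>"
    have "0 \<le> log 16 (real n)" using elim(2) by simp
    then have k: "real k \<le> log 16 (real n)" "log 16 (real n) < real k + 1"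
      unfolding k_def by linarith+
    have "real (16 ^ k) = 16 powr real k" by (simp add: powr_realpow)
    also have "\<dots> \<le> 16 powr log 16 (real n)" using k(1) by (intro powr_mono) auto
    also have "\<dots> = real n" using elim(2) by simp
    finally have "16 ^ k \<le> n" by (simp only: of_nat_le_iff)
    then have erdos: "real k * ln (real n) * 2 ^ k + real k < real n"
      by (rule erdos_condition_if_16_power_le[OF elim(1)])
    then obtain A where A: "\<forall>X. X \<subseteq> {0..<n} \<longrightarrow> card X = k \<longrightarrow> (\<exists>u\<in>{0..<n} - X. \<forall>x\<in>X. beats A u x)"
      using exists_tournament_dominating_all_k_sets binomial_mult_power_less_one by blast
    have "0 \<le> real k * ln (real n) * 2 ^ k" using ln_of_nat_nonneg by simp
    then have "k \<le> n" using erdos by linarith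
    then have "k < upper_dir_dom_number (r - 1) {0..<n} (complete_hyp_edges n r)"
      by (rule upper_dir_dom_number_gt[where b = "beats A", OF assms beats_asym]) (use A in blast)
    then have "real k + 1 \<le> real (upper_dir_dom_number (r - 1) {0..<n} (complete_hyp_edges n r))"
      by linarith
    moreover have "ln (real n) / ln 16 = log 16 (real n)" by (simp add: log_def)
    ultimately show ?case using k(2) by linarith
  qed
qed

lemma powr_le_max_one: "0 \<le> x \<Longrightarrow> 0 \<le> a \<Longrightarrow> a \<le> 1 \<Longrightarrow> x powr a \<le> max 1 (x::real)"
proof (cases "x \<le> 1")
  case True
  assume "0 \<le> x" "0 \<le> a"
  then show ?thesis using True powr_le1 by fastforce
next
  case False
  assume "a \<le> 1"
  then have "x powr a \<le> x powr 1" using False by (intro powr_mono) auto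
  then show ?thesis using False by simp
qed

lemma ln_powr_lower_bound:
  fixes f :: "nat \<Rightarrow> real"
  assumes a: "0 \<le> a" "a \<le> 1" and "0 < d"
    and one_le: "\<forall>n\<ge>m. 1 \<le> f n"
    and eventually_ge: "\<forall>\<^sub>F n in sequentially. d * ln (real n) \<le> f n"
  shows "\<exists>c>0. \<forall>n\<ge>m. c * ln (real n) powr a \<le> f n"
proof -
  obtain N where N: "\<And>n. N \<le> n \<Longrightarrow> d * ln (real n) \<le> f n"
    using eventually_ge unfolding eventually_sequentially by blast
  define M where "M = max 1 (ln (real N))"
  have "0 < M" by (simp add: M_def)
  show ?thesis
  proof (intro exI conjI allI impI)
    show "0 < min d (1 / M)" using \<open>0 < d\<close> \<open>0 < M\<close> by simp
    fix n assume "m \<le> n"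
    have powr_le: "ln (real n) powr a \<le> max 1 (ln (real n))"
      using ln_of_nat_nonneg a by (rule powr_le_max_one)
    show "min d (1 / M) * ln (real n) powr a \<le> f n"
    proof (cases "N \<le> n \<and> 1 \<le> ln (real n)")
      case True
      then have "min d (1 / M) * ln (real n) powr a \<le> d * ln (real n)"
        using powr_le \<open>0 < d\<close> by (intro mult_mono) auto
      then show ?thesis using N True by fastforce
    next
      case False
      have "max 1 (ln (real n)) \<le> M"
      proof (cases "N \<le> n")
        case True
        then show ?thesis using False by (simp add: M_def)
      next
        case False
        then have "ln (real n) \<le> ln (real N)"
          using ln_of_nat_nonneg[of N] by (cases "n = 0") simp_all
        then show ?thesis by (auto simp: M_def)
      qed
      then have "min d (1 / M) * ln (real n) powr a \<le> 1 / M * M"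
        using powr_le \<open>0 < M\<close> by (intro mult_mono) auto
      then show ?thesis using one_le \<open>m \<le> n\<close> \<open>0 < M\<close> by fastforce
    qed
  qed
qed

theorem mainTheorem2:
  fixes r :: nat
  assumes "r \<ge> 2"
  shows "\<exists>c::real. c > 0 \<and>
    (\<forall>n::nat. n \<ge> r \<longrightarrow>
       real (upper_dir_dom_number (r - 1) {0..<n} (complete_hyp_edges n r))
         \<ge> c * ln (real n) powr (1 / (real r - 1)))"
proof -
  have "\<exists>c>0. \<forall>n\<ge>r. c * ln (real n) powr (1 / (real r - 1))
      \<le> real (upper_dir_dom_number (r - 1) {0..<n} (complete_hyp_edges n r))"
  proof (rule ln_powr_lower_bound)
    show "0 \<le> 1 / (real r - 1)" "1 / (real r - 1) \<le> 1" using assms by auto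
    show "\<forall>n\<ge>r. 1 \<le> real (upper_dir_dom_number (r - 1) {0..<n} (complete_hyp_edges n r))"
      using upper_dir_dom_number_pos assms by (simp add: Suc_le_eq)
    show "\<forall>\<^sub>F n in sequentially. 1 / ln 16 * ln (real n)
        \<le> real (upper_dir_dom_number (r - 1) {0..<n} (complete_hyp_edges n r))"
      using eventually_upper_dir_dom_number_gt_log[OF assms] by eventually_elim simp
  qed (use one_lt_ln_16 in simp)
  then show ?thesis by auto
qed

end
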